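(* Let $X$ be a locally compact Hausdorff space, let $M$ be a countably generated Hilbert $C_0(X)$-module, and let $U,V\subseteq X$ be $\sigma$-compact open sets with $V$ compactly contained in $U$ (i.e. $\overline V$ compact and $\overline V\subseteq U$). If $F$ is a submodule of $MC_0(V)$ that is a direct summand of $MC_0(U)$ (i.e. $MC_0(U)=F+ (F^\perp\cap MC_0(U))$), then $F$ is a direct summand of $M$, i.e. $M=F+F^\perp$.
   Context: $F^\perp$ denotes the orthogonal complement with respect to the $C_0(X)$-valued inner product. $MC_0(U)$ denotes the closed submodule $\overline{\mathrm{span}}\{m f: m\in M,\ f\in C_0(U)\}$. *)

theory Defs
  imports "HOL-Analysis.Analysis"
begin

definition C0 :: "('x::topological_space \<Rightarrow> complex) set" where
  "C0 = {f. continuous_on UNIV f \<and>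
             (\<forall>e>0. \<exists>K. compact K \<and> (\<forall>x. x \<notin> K \<longrightarrow> cmod (f x) < e))}"

text \<open>C_0(U) for U open, identified with the functions in C_0(X) vanishing off U.\<close>
definition C0_on :: "'x::topological_space set \<Rightarrow> ('x \<Rightarrow> complex) set" where
  "C0_on U = {f \<in> C0. \<forall>x. x \<notin> U \<longrightarrow> f x = 0}"

definition supnorm :: "('x \<Rightarrow> complex) \<Rightarrow> real" where
  "supnorm f = Sup (range (\<lambda>x. cmod (f x)))"

definition sigma_compact :: "'x::topological_space set \<Rightarrow> bool" where
  "sigma_compact U \<longleftrightarrow> (\<exists>K :: nat \<Rightarrow> 'x set. (\<forall>n. compact (K n)) \<and> U = (\<Union>n. K n))"

text \<open>A Hilbert C_0(X)-module is given by a carrier type 'm (an abelian group),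
  a complex scalar multiplication sc, a right action act of C_0(X), and a
  C_0(X)-valued inner product ip (linear in the second variable).\<close>

definition hnorm :: "('m \<Rightarrow> 'm \<Rightarrow> 'x \<Rightarrow> complex) \<Rightarrow> 'm \<Rightarrow> real" where
  "hnorm ip m = sqrt (supnorm (ip m m))"

definition hilbert_C0_module ::
  "(complex \<Rightarrow> 'm::ab_group_add \<Rightarrow> 'm) \<Rightarrow> ('m \<Rightarrow> ('x::topological_space \<Rightarrow> complex) \<Rightarrow> 'm)
   \<Rightarrow> ('m \<Rightarrow> 'm \<Rightarrow> 'x \<Rightarrow> complex) \<Rightarrow> bool" where
  "hilbert_C0_module sc act ip \<longleftrightarrow>
     \<comment> \<open>complex vector space\<close>
     (\<forall>c m n. sc c (m + n) = sc c m + sc c n) \<and>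
     (\<forall>c d m. sc (c + d) m = sc c m + sc d m) \<and>
     (\<forall>c d m. sc (c * d) m = sc c (sc d m)) \<and>
     (\<forall>m. sc 1 m = m) \<and>
     \<comment> \<open>right C_0(X)-module, compatible with scalars\<close>
     (\<forall>m f g. f \<in> C0 \<longrightarrow> g \<in> C0 \<longrightarrow> act (act m f) g = act m (\<lambda>x. f x * g x)) \<and>
     (\<forall>m f g. f \<in> C0 \<longrightarrow> g \<in> C0 \<longrightarrow> act m (\<lambda>x. f x + g x) = act m f + act m g) \<and>
     (\<forall>m n f. f \<in> C0 \<longrightarrow> act (m + n) f = act m f + act n f) \<and>
     (\<forall>c m f. f \<in> C0 \<longrightarrow> act (sc c m) f = sc c (act m f)) \<and>
     (\<forall>c m f. f \<in> C0 \<longrightarrow> act m (\<lambda>x. c * f x) = sc c (act m f)) \<and>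
     \<comment> \<open>C_0(X)-valued inner product\<close>
     (\<forall>m n. ip m n \<in> C0) \<and>
     (\<forall>m n n'. ip m (n + n') = (\<lambda>x. ip m n x + ip m n' x)) \<and>
     (\<forall>c m n. ip m (sc c n) = (\<lambda>x. c * ip m n x)) \<and>
     (\<forall>m n f. f \<in> C0 \<longrightarrow> ip m (act n f) = (\<lambda>x. ip m n x * f x)) \<and>
     (\<forall>m n. ip n m = (\<lambda>x. cnj (ip m n x))) \<and>
     (\<forall>m x. Im (ip m m x) = 0 \<and> Re (ip m m x) \<ge> 0) \<and>
     (\<forall>m. ip m m = (\<lambda>x. 0) \<longrightarrow> m = 0) \<and>
     \<comment> \<open>completeness for the norm sqrt of the sup-norm of ip m m\<close>
     (\<forall>s :: nat \<Rightarrow> 'm. (\<forall>e>0. \<exists>N. \<forall>i\<ge>N. \<forall>j\<ge>N. hnorm ip (s i - s j) < e) \<longrightarrow>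
         (\<exists>l. (\<lambda>n. hnorm ip (s n - l)) \<longlonglongrightarrow> 0))"

definition hspan :: "(complex \<Rightarrow> 'm::ab_group_add \<Rightarrow> 'm) \<Rightarrow> 'm set \<Rightarrow> 'm set" where
  "hspan sc S = {m. \<exists>(k::nat) c v. (\<forall>i<k. v i \<in> S) \<and> m = (\<Sum>i<k. sc (c i) (v i))}"

definition hclosure :: "('m::ab_group_add \<Rightarrow> 'm \<Rightarrow> 'x \<Rightarrow> complex) \<Rightarrow> 'm set \<Rightarrow> 'm set" where
  "hclosure ip S = {m. \<exists>s :: nat \<Rightarrow> 'm. (\<forall>n. s n \<in> S) \<and> (\<lambda>n. hnorm ip (s n - m)) \<longlonglongrightarrow> 0}"

definition hcspan where
  "hcspan sc ip S = hclosure ip (hspan sc S)"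

definition MC0 where
  "MC0 sc act ip U = hcspan sc ip {act m f | m f. f \<in> C0_on U}"

definition countably_generated where
  "countably_generated sc act ip \<longleftrightarrow>
     (\<exists>G. countable G \<and> hcspan sc ip {act g f | g f. g \<in> G \<and> f \<in> C0} = UNIV)"

definition submodule where
  "submodule sc act F \<longleftrightarrow> 0 \<in> F \<and> (\<forall>a\<in>F. \<forall>b\<in>F. a + b \<in> F) \<and>
     (\<forall>c. \<forall>a\<in>F. sc c a \<in> F) \<and> (\<forall>f\<in>C0. \<forall>a\<in>F. act a f \<in> F)"

definition hperp where
  "hperp ip F = {m. \<forall>n\<in>F. ip n m = (\<lambda>x. 0)}"

end

theory Submission
  imports Defs
begin

text \<open>Urysohn's lemma gives \<open>\<phi> \<in> C\<^sub>0(U)\<close> with \<open>\<phi> = 1\<close> on \<open>V\<close>. For \<open>m \<in> M\<close>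
  decompose \<open>m\<phi> = a + b\<close> with \<open>a \<in> F\<close>, \<open>b \<in> F\<^sup>\<perp>\<close>. Every \<open>\<langle>n, \<cdot>\<rangle>\<close> with
  \<open>n \<in> F \<subseteq> MC\<^sub>0(V)\<close> vanishes off \<open>V\<close>, so \<open>\<langle>n, m\<rangle> = \<langle>n, m\<rangle>\<phi> = \<langle>n, m\<phi>\<rangle> = \<langle>n, a\<rangle>\<close>,
  i.e. \<open>m - a \<in> F\<^sup>\<perp>\<close>.\<close>

lemma Hausdorff_space_euclidean_t2: "Hausdorff_space (euclidean :: 'a::t2_space topology)"
  unfolding Hausdorff_space_def using hausdorff by (fastforce simp: disjnt_def)

lemma locally_compact_compact_neighbourhood:
  fixes C U :: "'a::t2_space set"
  assumes "locally_compact_space (euclidean :: 'a topology)" "compact C" "C \<subseteq> U" "open U"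
  obtains W L where "open W" "compact L" "C \<subseteq> W" "W \<subseteq> L" "L \<subseteq> U"
proof -
  let ?X = "subtopology euclidean U"
  have lc: "locally_compact_space ?X"
    using Hausdorff_space_euclidean_t2 assms(1,4) by (intro locally_compact_space_open_subset) auto
  have "Hausdorff_space ?X"
    using Hausdorff_space_euclidean_t2 Hausdorff_space_subtopology by blast
  moreover have "compactin ?X C"
    using assms by (simp add: compactin_subtopology)
  ultimately obtain W L where "openin ?X W" "compactin ?X L" "C \<subseteq> W" "W \<subseteq> L"
    using locally_compact_space_compact_closed_compact[OF disjI1, THEN iffD1, OF _ lc] by meson
  with assms(4) show ?thesis
    by (intro that[of W L]) (auto simp: openin_open_subtopology compactin_subtopology)
qed

lemma locally_compact_Urysohn:
  fixes C U :: "'a::t2_space set"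
  assumes lc: "locally_compact_space (euclidean :: 'a topology)"
    and "compact C" "C \<subseteq> U" "open U"
  obtains g :: "'a \<Rightarrow> real" and L where "continuous_on UNIV g" "compact L" "L \<subseteq> U"
    "\<forall>x\<in>C. g x = 1" "\<forall>x. x \<notin> L \<longrightarrow> g x = 0"
proof -
  obtain W L where WL: "open W" "compact L" "C \<subseteq> W" "W \<subseteq> L" "L \<subseteq> U"
    using locally_compact_compact_neighbourhood assms by blast
  have "completely_regular_space (euclidean :: 'a topology)"
    using lc Hausdorff_space_euclidean_t2 locally_compact_regular_imp_completely_regular_space
      locally_compact_Hausdorff_imp_regular_space by blast
  then obtain g where g: "continuous_map euclidean (subtopology euclidean {0..1::real}) g"
    "g ` (- W) \<subseteq> {0}" "g ` C \<subseteq> {1}"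
    using Urysohn_completely_regular_compact_closed[of 0 1 euclidean C "- W"] WL assms(2)
    by (auto simp: closed_closedin[symmetric] disjnt_def)
  have "continuous_on UNIV g"
    using g(1) by (metis continuous_map_iff_continuous2 continuous_map_in_subtopology)
  moreover have "g x = 0" if "x \<notin> L" for x
    using g(2) WL that by blast
  ultimately show ?thesis
    using g(3) WL by (intro that[of g L]) auto
qed

lemma compactly_supported_in_C0_on:
  fixes g :: "'a::topological_space \<Rightarrow> real"
  assumes "continuous_on UNIV g" "compact L" "L \<subseteq> U" "\<forall>x. x \<notin> L \<longrightarrow> g x = 0"
  shows "(\<lambda>x. complex_of_real (g x)) \<in> C0_on U"
  unfolding C0_on_def C0_def using assms by (auto intro!: continuous_intros)

lemma C0_on_cutoff:
  fixes C U :: "'a::t2_space set"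
  assumes "locally_compact_space (euclidean :: 'a topology)"
    and "compact C" "C \<subseteq> U" "open U"
  obtains \<phi> where "\<phi> \<in> C0_on U" "\<forall>x\<in>C. \<phi> x = 1"
  using locally_compact_Urysohn[OF assms] compactly_supported_in_C0_on
  by (metis of_real_1)

lemma C0_bdd_above:
  assumes "f \<in> C0"
  shows "bdd_above (range (\<lambda>x. cmod (f x)))"
proof -
  have "\<forall>e>0. \<exists>K. compact K \<and> (\<forall>x. x \<notin> K \<longrightarrow> cmod (f x) < e)"
    using assms by (simp add: C0_def)
  then obtain K where K: "compact K" "\<forall>x. x \<notin> K \<longrightarrow> cmod (f x) < 1"
    using zero_less_one by blast
  have "compact (f ` K)"
    using assms K unfolding C0_def by (blast intro: compact_continuous_image continuous_on_subset)
  then obtain B where B: "\<forall>y\<in>f ` K. norm y \<le> B"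
    using compact_imp_bounded bounded_iff by metis
  have "cmod (f x) \<le> max B 1" for x
    using B K by (cases "x \<in> K") force+
  then show ?thesis by (intro bdd_aboveI) auto
qed

lemma norm_le_supnorm: "f \<in> C0 \<Longrightarrow> cmod (f x) \<le> supnorm f"
  unfolding supnorm_def using C0_bdd_above by (intro cSup_upper) auto

lemma nonneg_quadratic_imp_le:
  fixes a b q :: real
  assumes "\<And>t. 0 \<le> a - 2*t*q + t^2*q*b" "a \<ge> 0" "b \<ge> 0" "q \<ge> 0"
  shows "q \<le> a * b"
proof (cases "q = 0")
  case False
  then have q: "q > 0" using assms by simp
  show ?thesis
  proof (cases "b = 0")
    case True
    have "0 \<le> a - 2*((a+1)/(2*q))*q" using assms(1)[of "(a+1)/(2*q)"] True by simp
    also have "\<dots> = -1" using q by (simp add: field_simps)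
    finally show ?thesis by simp
  next
    case False
    then have b: "b > 0" using assms by simp
    have "0 \<le> a - 2*(1/b)*q + (1/b)^2*q*b" using assms(1) by blast
    also have "\<dots> = a - q/b" using b by (simp add: field_simps power2_eq_square)
    finally show ?thesis using b by (simp add: field_simps)
  qed
qed (use assms in simp)

context
  fixes sc :: "complex \<Rightarrow> 'm::ab_group_add \<Rightarrow> 'm"
    and act :: "'m \<Rightarrow> ('x::topological_space \<Rightarrow> complex) \<Rightarrow> 'm"
    and ip :: "'m \<Rightarrow> 'm \<Rightarrow> 'x \<Rightarrow> complex"
  assumes H: "hilbert_C0_module sc act ip"
begin

lemma ip_add: "ip m (n + n') x = ip m n x + ip m n' x"
  using H unfolding hilbert_C0_module_def by metis

lemma ip_sc: "ip m (sc c n) x = c * ip m n x"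
  using H unfolding hilbert_C0_module_def by metis

lemma ip_act: "f \<in> C0 \<Longrightarrow> ip m (act n f) x = ip m n x * f x"
  using H unfolding hilbert_C0_module_def by metis

lemma ip_cnj: "ip n m x = cnj (ip m n x)"
  using H unfolding hilbert_C0_module_def by metis

lemma ip_self_nonneg: "Im (ip m m x) = 0" "Re (ip m m x) \<ge> 0"
  using H unfolding hilbert_C0_module_def by metis+

lemma ip_in_C0: "ip m n \<in> C0"
  using H unfolding hilbert_C0_module_def by metis

lemma ip_zero: "ip m 0 x = 0"
  using ip_add[of m 0 0 x] by simp

lemma ip_diff: "ip m (a - b) x = ip m a x - ip m b x"
  using ip_add[of m "a - b" b x] by simp

lemma ip_add_left: "ip (a + b) m x = ip a m x + ip b m x"
  by (metis ip_cnj ip_add complex_cnj_add)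

lemma ip_sc_left: "ip (sc c a) m x = cnj c * ip a m x"
  by (metis ip_cnj ip_sc complex_cnj_mult)

lemma ip_self_real: "ip m m x = of_real (Re (ip m m x))"
  using ip_self_nonneg(1)[of m x] by (simp add: complex_eq_iff)

text \<open>Pointwise Cauchy--Schwarz: expand \<open>\<langle>u, u\<rangle>(x) \<ge> 0\<close> for \<open>u = m - t \<beta>\<^sup>* d\<close>, \<open>\<beta> = \<langle>m, d\<rangle>(x)\<close>.\<close>
lemma ip_Cauchy_Schwarz: "(cmod (ip m d x))^2 \<le> Re (ip m m x) * Re (ip d d x)"
proof -
  define \<beta> where "\<beta> = ip m d x"
  define q where "q = (cmod \<beta>)^2"
  have \<beta>: "cnj \<beta> * \<beta> = of_real q" "\<beta> * (cnj \<beta> * y) = of_real q * y" for y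
    unfolding q_def by (metis complex_norm_square mult.commute mult.assoc)+
  have "0 \<le> Re (ip m m x) - 2*t*q + t^2*q*Re (ip d d x)" for t :: real
  proof -
    define z where "z = - (of_real t * cnj \<beta>)"
    have "ip (m + sc z d) (m + sc z d) x
        = ip m m x + z * \<beta> + cnj z * cnj \<beta> + cnj z * z * ip d d x"
      unfolding \<beta>_def
      by (simp add: ip_add ip_add_left ip_sc ip_sc_left algebra_simps ip_cnj[of d m])
    also have "\<dots> = of_real (Re (ip m m x) - 2*t*q + t^2*q*Re (ip d d x))"
      by (subst ip_self_real[of m], subst ip_self_real[of d])
        (simp add: z_def \<beta> algebra_simps power2_eq_square)
    finally show ?thesis using ip_self_nonneg(2)[of "m + sc z d" x] by simp
  qed
  then show ?thesis
    unfolding q_def[symmetric] \<beta>_def[symmetric]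
    by (intro nonneg_quadratic_imp_le) (auto simp: ip_self_nonneg q_def)
qed

lemma ip_self_le_hnorm: "Re (ip d d x) \<le> (hnorm ip d)^2"
proof -
  have "cmod (ip d d x) = Re (ip d d x)"
    using ip_self_nonneg[of d x] by (simp add: cmod_eq_Re)
  with norm_le_supnorm[OF ip_in_C0, of d d x] show ?thesis
    using ip_self_nonneg(2)[of d x] unfolding hnorm_def by simp
qed

lemma hnorm_nonneg: "hnorm ip d \<ge> 0"
  unfolding hnorm_def using norm_le_supnorm[OF ip_in_C0, of d d] norm_ge_zero
  by (meson order_trans real_sqrt_ge_zero)

lemma norm_ip_le_hnorm: "cmod (ip m d x) \<le> sqrt (Re (ip m m x)) * hnorm ip d"
proof -
  have "(cmod (ip m d x))^2 \<le> Re (ip m m x) * (hnorm ip d)^2"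
    using ip_Cauchy_Schwarz[of m d x] ip_self_le_hnorm[of d x] ip_self_nonneg(2)[of m x]
    by (meson mult_left_mono order_trans)
  also have "\<dots> = (sqrt (Re (ip m m x)) * hnorm ip d)^2"
    using ip_self_nonneg(2)[of m x] by (simp add: power_mult_distrib)
  finally show ?thesis
    using hnorm_nonneg[of d] ip_self_nonneg(2)[of m x]
    by (meson power2_le_imp_le mult_nonneg_nonneg real_sqrt_ge_zero)
qed

lemma ip_sum: "ip m (\<Sum>i<(k::nat). sc (c i) (v i)) x = (\<Sum>i<k. c i * ip m (v i) x)"
  by (induction k) (simp_all add: ip_zero ip_add ip_sc)

lemma ip_hspan_vanishes_outside:
  assumes "x \<notin> V" "n \<in> hspan sc {act m f | m f. f \<in> C0_on V}"
  shows "ip m' n x = 0"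
proof -
  obtain k :: nat and c v where v: "\<forall>i<k. v i \<in> {act m f | m f. f \<in> C0_on V}"
    and n: "n = (\<Sum>i<k. sc (c i) (v i))"
    using assms(2) unfolding hspan_def by blast
  have "ip m' (v i) x = 0" if "i < k" for i
    using v that assms(1) ip_act by (force simp: C0_on_def)
  then show ?thesis unfolding n ip_sum by simp
qed

lemma ip_MC0_vanishes_outside:
  assumes "x \<notin> V" "n \<in> MC0 sc act ip V"
  shows "ip m' n x = 0"
proof -
  obtain s where s: "\<And>k. s k \<in> hspan sc {act m f | m f. f \<in> C0_on V}"
    and lim: "(\<lambda>k. hnorm ip (s k - n)) \<longlonglongrightarrow> 0"
    using assms(2) unfolding MC0_def hcspan_def hclosure_def by blast
  define A where "A = sqrt (Re (ip m' m' x))"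
  have "cmod (ip m' n x) \<le> A * hnorm ip (s k - n)" for k
  proof -
    have "ip m' n x = - ip m' (s k - n) x"
      using ip_hspan_vanishes_outside[OF assms(1) s] by (simp add: ip_diff)
    then show ?thesis using norm_ip_le_hnorm[of m' "s k - n" x] unfolding A_def by simp
  qed
  moreover have "(\<lambda>k. A * hnorm ip (s k - n)) \<longlonglongrightarrow> 0"
    using tendsto_mult_right_zero[OF lim] .
  ultimately have "cmod (ip m' n x) \<le> 0"
    by (intro LIMSEQ_le_const[where X="\<lambda>k. A * hnorm ip (s k - n)"]) auto
  then show ?thesis by simp
qed

lemma hnorm_zero: "hnorm ip 0 = 0"
  unfolding hnorm_def supnorm_def by (simp add: ip_zero)

lemma act_in_MC0:
  assumes "f \<in> C0_on U"
  shows "act m f \<in> MC0 sc act ip U"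
proof -
  have "sc 1 (act m f) = act m f"
    using H by (simp add: hilbert_C0_module_def)
  then have "act m f \<in> hspan sc {act m f | m f. f \<in> C0_on U}"
    unfolding hspan_def
    by (intro CollectI exI[of _ "1::nat"] exI[of _ "\<lambda>_. 1"] exI[of _ "\<lambda>_. act m f"])
      (use assms in auto)
  then show ?thesis
    unfolding MC0_def hcspan_def hclosure_def
    by (intro CollectI exI[of _ "\<lambda>_. act m f"]) (simp add: hnorm_zero)
qed

lemma ip_MC0_act_cutoff:
  assumes "n \<in> MC0 sc act ip V" "\<phi> \<in> C0" "\<forall>x\<in>V. \<phi> x = 1"
  shows "ip n (act m \<phi>) = ip n m"
proof
  fix x
  have "ip n m x = 0" if "x \<notin> V"
    using ip_MC0_vanishes_outside[OF that assms(1)] ip_cnj by (metis complex_cnj_zero)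
  then show "ip n (act m \<phi>) x = ip n m x"
    using assms(3) by (cases "x \<in> V") (auto simp: ip_act[OF assms(2)])
qed

end

theorem lemma6p8:
  fixes sc :: "complex \<Rightarrow> 'm::ab_group_add \<Rightarrow> 'm"
    and act :: "'m \<Rightarrow> ('x::t2_space \<Rightarrow> complex) \<Rightarrow> 'm"
    and ip :: "'m \<Rightarrow> 'm \<Rightarrow> 'x \<Rightarrow> complex"
    and U V :: "'x set" and F :: "'m set"
  assumes "locally_compact_space (euclidean :: 'x topology)"
    and "hilbert_C0_module sc act ip"
    and "countably_generated sc act ip"
    and "open U" and "sigma_compact U"
    and "open V" and "sigma_compact V"
    and "compact (closure V)" and "closure V \<subseteq> U"
    and "submodule sc act F"
    and "F \<subseteq> MC0 sc act ip V"
    and "MC0 sc act ip U = {a + b | a b. a \<in> F \<and> b \<in> hperp ip F \<inter> MC0 sc act ip U}"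
  shows "UNIV = {a + b | a b. a \<in> F \<and> b \<in> hperp ip F}"
proof (intro set_eqI iffI)
  fix m
  obtain \<phi> where \<phi>: "\<phi> \<in> C0_on U" "\<forall>x\<in>closure V. \<phi> x = 1"
    using C0_on_cutoff[OF assms(1,8,9,4)] .
  have "\<phi> \<in> C0" "\<forall>x\<in>V. \<phi> x = 1"
    using \<phi> closure_subset by (auto simp: C0_on_def)
  obtain a b where ab: "act m \<phi> = a + b" "a \<in> F" "b \<in> hperp ip F"
    using act_in_MC0[OF assms(2) \<phi>(1)] assms(12) by blast
  have "ip n m x = ip n a x" if "n \<in> F" for n x
  proof -
    have "ip n m x = ip n (act m \<phi>) x"
      using ip_MC0_act_cutoff[OF assms(2) _ \<open>\<phi> \<in> C0\<close> \<open>\<forall>x\<in>V. \<phi> x = 1\<close>] that assms(11) by auto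
    also have "\<dots> = ip n a x + ip n b x" by (simp add: ab(1) ip_add[OF assms(2)])
    finally show ?thesis using ab(3) that by (simp add: hperp_def)
  qed
  then have "m - a \<in> hperp ip F"
    by (auto simp: hperp_def ip_diff[OF assms(2)])
  then show "m \<in> {a + b | a b. a \<in> F \<and> b \<in> hperp ip F}"
    using ab(2) by (intro CollectI exI[of _ a] exI[of _ "m - a"]) simp
qed simp

end
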